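(* Let $c_1\ge\dots\ge c_m\ge0$ and $d_1\ge\dots\ge d_m\ge0$ be integers with $(c_1,\dots,c_m)\ne(d_1,\dots,d_m)$, and set $c_0=d_0=+\infty$. Let $\ell=\max\{i: c_i\ne d_i\}$, $f=\max\{i\in\{1,\dots,\ell\}: c_i<d_{i-1}\}$, $f'=\max\{i\in\{1,\dots,\ell\}: d_i<c_{i-1}\}$. Let $(r_1,r_2,\dots)$ and $(s_1,s_2,\dots)$ be the conjugate partitions of $(c_1,\dots,c_m)$ and $(d_1,\dots,d_m)$, $r_0=s_0=m$, $x=\min\{i: r_i\ne s_i\}$, $e=\min\{i\ge x-1: s_{i+1}\ge r_{i+1}\}$ and $e'=\min\{i\ge x-1: r_{i+1}\ge s_{i+1}\}$. Then $e=c_f$ and $e'=d_{f'}$.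
   Context: The conjugate of a finite nonincreasing sequence $(a_1,\dots,a_n)$ of nonnegative integers is $(\bar a_1,\bar a_2,\dots)$ with $\bar a_k=\#\{i: a_i\ge k\}$, $k\ge1$. *)

theory Defs
  imports Main "HOL-Library.Extended_Nat"
begin

text \<open>A sequence (a_1,...,a_m) is represented by a function a :: nat => nat,
  only the values at indices 1..m being relevant.\<close>

text \<open>Conjugate: conjugate m a k = #{i in {1..m}. a_i >= k}.  For k >= 1 this is the
  paper's conjugate; for k = 0 it equals m, matching the convention r_0 = m.\<close>
definition conjugate :: "nat \<Rightarrow> (nat \<Rightarrow> nat) \<Rightarrow> nat \<Rightarrow> nat" where
  "conjugate m a k = card {i \<in> {1..m}. k \<le> a i}"

definition ext0 :: "(nat \<Rightarrow> nat) \<Rightarrow> nat \<Rightarrow> enat" where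
  "ext0 a i = (if i = 0 then \<infinity> else enat (a i))"

end

theory Submission
  imports Defs
begin

text \<open>For a nonincreasing sequence, \<open>j \<le> r\<^sub>k \<longleftrightarrow> k \<le> c\<^sub>j\<close> (for \<open>1 \<le> j \<le> m\<close>), so the claim
  becomes a comparison of thresholds.  Since \<open>c\<^sub>l \<noteq> d\<^sub>l\<close>, at \<open>k = min c\<^sub>l d\<^sub>l + 1\<close> exactly one
  of \<open>r\<^sub>k, s\<^sub>k\<close> is \<open>\<ge> l\<close>, whence \<open>x \<le> c\<^sub>l + 1 \<le> c\<^sub>f + 1\<close>.  At \<open>k = c\<^sub>f + 1\<close> we get
  \<open>r\<^sub>k < f\<close>, while \<open>c\<^sub>f < d\<^bsub>f-1\<^esub>\<close> gives \<open>s\<^sub>k \<ge> f - 1\<close>.  For \<open>x \<le> k \<le> c\<^sub>f\<close>, maximality of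
  \<open>f\<close> says \<open>c\<^sub>j \<ge> d\<^bsub>j-1\<^esub>\<close> for \<open>f < j \<le> l\<close>; hence the index \<open>j = s\<^sub>k + 1\<close>, the first with
  \<open>d\<^sub>j < k\<close>, still has \<open>c\<^sub>j \<ge> k\<close>, i.e. \<open>s\<^sub>k < r\<^sub>k\<close>, unless \<open>j > l\<close>, in which case \<open>c\<close> and \<open>d\<close>
  would have the same conjugate at \<open>x\<close>.  Exchanging \<open>c\<close> and \<open>d\<close> gives \<open>e' = d\<^bsub>f'\<^esub>\<close>.\<close>

lemma antimono_on_atLeastAtMost_SucI:
  fixes a :: "nat \<Rightarrow> 'a::preorder"
  assumes step: "\<And>i. n \<le> i \<Longrightarrow> i < m \<Longrightarrow> a (Suc i) \<le> a i"
  shows "antimono_on {n..m} a"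
proof (rule monotone_onI)
  fix i j assume "i \<in> {n..m}" "j \<in> {n..m}" "i \<le> j"
  then have "n \<le> i" "j \<le> m" by auto
  from \<open>i \<le> j\<close> show "a j \<le> a i"
  proof (induction j rule: dec_induct)
    case (step k)
    then have "a (Suc k) \<le> a k" using assms \<open>n \<le> i\<close> \<open>j \<le> m\<close> by simp
    with step.IH show ?case using order_trans by blast
  qed simp
qed

lemma le_conjugate_iff:
  assumes anti: "antimono_on {1..m} a" and "1 \<le> j"
  shows "j \<le> conjugate m a k \<longleftrightarrow> j \<le> m \<and> k \<le> a j"
proof
  assume j: "j \<le> m \<and> k \<le> a j"
  have "k \<le> a i" if "i \<in> {1..j}" for i
    using that j monotone_onD[OF anti, of i j] by auto
  then have "{1..j} \<subseteq> {i \<in> {1..m}. k \<le> a i}" using j by auto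
  then show "j \<le> conjugate m a k"
    unfolding conjugate_def using card_mono[of "{i \<in> {1..m}. k \<le> a i}" "{1..j}"] by simp
next
  assume j: "j \<le> conjugate m a k"
  have "card {i \<in> {1..m}. k \<le> a i} \<le> card {1..m}"
    by (rule card_mono) auto
  then have "conjugate m a k \<le> m" unfolding conjugate_def by simp
  with j have "j \<le> m" by simp
  moreover have "k \<le> a j"
  proof (rule ccontr)
    assume "\<not> k \<le> a j"
    then have "k \<le> a i \<Longrightarrow> i \<in> {1..m} \<Longrightarrow> i < j" for i
      using monotone_onD[OF anti, of j i] \<open>1 \<le> j\<close> \<open>j \<le> m\<close> by fastforce
    then have "{i \<in> {1..m}. k \<le> a i} \<subseteq> {1..<j}" by auto
    then have "conjugate m a k \<le> j - 1"
      unfolding conjugate_def using card_mono[of "{1..<j}" "{i \<in> {1..m}. k \<le> a i}"] by simp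
    with j \<open>1 \<le> j\<close> show False by simp
  qed
  ultimately show "j \<le> m \<and> k \<le> a j" ..
qed

lemma conjugate_differ_at_min:
  assumes "antimono_on {1..m} a" "antimono_on {1..m} b"
    and "l \<in> {1..m}" "a l \<noteq> b l"
  shows "conjugate m a (min (a l) (b l) + 1) \<noteq> conjugate m b (min (a l) (b l) + 1)"
proof -
  let ?k = "min (a l) (b l) + 1"
  have "l \<le> conjugate m a ?k \<longleftrightarrow> \<not> l \<le> conjugate m b ?k"
    using le_conjugate_iff[OF assms(1)] le_conjugate_iff[OF assms(2)] assms(3,4) by auto
  then show ?thesis by auto
qed

locale partition_pair =
  fixes m :: nat and c d :: "nat \<Rightarrow> nat"
  assumes c_anti: "antimono_on {1..m} c" and d_anti: "antimono_on {1..m} d"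
    and differ: "\<exists>i \<in> {1..m}. c i \<noteq> d i"
begin

definition last_diff :: nat where
  "last_diff = Max {i \<in> {1..m}. c i \<noteq> d i}"

definition last_drop :: nat where
  "last_drop = Max {i \<in> {1..last_diff}. enat (c i) < ext0 d (i - 1)}"

definition first_conjugate_diff :: nat where
  "first_conjugate_diff = (LEAST i. conjugate m c i \<noteq> conjugate m d i)"

lemma last_diff: "last_diff \<in> {1..m}" "c last_diff \<noteq> d last_diff"
proof -
  have "last_diff \<in> {i \<in> {1..m}. c i \<noteq> d i}"
    unfolding last_diff_def using differ by (intro Max_in) auto
  then show "last_diff \<in> {1..m}" "c last_diff \<noteq> d last_diff" by auto
qed

lemma eq_beyond_last_diff: "last_diff < i \<Longrightarrow> i \<le> m \<Longrightarrow> c i = d i"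
  using Max_ge[of "{i \<in> {1..m}. c i \<noteq> d i}" i] last_diff unfolding last_diff_def by fastforce

lemma last_drop: "last_drop \<in> {1..last_diff}" "enat (c last_drop) < ext0 d (last_drop - 1)"
proof -
  have "1 \<in> {i \<in> {1..last_diff}. enat (c i) < ext0 d (i - 1)}"
    using last_diff by (simp add: ext0_def)
  then have "last_drop \<in> {i \<in> {1..last_diff}. enat (c i) < ext0 d (i - 1)}"
    unfolding last_drop_def by (intro Max_in) auto
  then show "last_drop \<in> {1..last_diff}" "enat (c last_drop) < ext0 d (last_drop - 1)" by auto
qed

lemma pred_le_beyond_last_drop: "last_drop < j \<Longrightarrow> j \<le> last_diff \<Longrightarrow> d (j - 1) \<le> c j"
  using Max_ge[of "{i \<in> {1..last_diff}. enat (c i) < ext0 d (i - 1)}" j] last_drop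
  unfolding last_drop_def by (fastforce simp: ext0_def)

lemma le_c_upto_last_diff:
  assumes j: "j \<in> {1..last_diff}" and "k \<le> c last_drop"
    and "last_drop < j \<Longrightarrow> k \<le> d (j - 1)"
  shows "k \<le> c j"
proof (cases "j \<le> last_drop")
  case True
  then have "c last_drop \<le> c j"
    using monotone_onD[OF c_anti, of j last_drop] last_drop j last_diff by auto
  with \<open>k \<le> c last_drop\<close> show ?thesis by simp
next
  case False
  with pred_le_beyond_last_drop[of j] j assms(3) show ?thesis by simp
qed

lemma first_conjugate_diff:
  "first_conjugate_diff - 1 \<le> c last_drop"
  "conjugate m c first_conjugate_diff \<noteq> conjugate m d first_conjugate_diff"
proof -
  let ?k = "min (c last_diff) (d last_diff) + 1"
  have neq_k: "conjugate m c ?k \<noteq> conjugate m d ?k"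
    using conjugate_differ_at_min[OF c_anti d_anti last_diff] .
  have "c last_diff \<le> c last_drop"
    using monotone_onD[OF c_anti, of last_drop last_diff] last_drop last_diff by auto
  moreover have "first_conjugate_diff \<le> ?k"
    unfolding first_conjugate_diff_def using neq_k by (rule Least_le)
  ultimately show "first_conjugate_diff - 1 \<le> c last_drop" by simp
  show "conjugate m c first_conjugate_diff \<noteq> conjugate m d first_conjugate_diff"
    unfolding first_conjugate_diff_def using neq_k by (rule LeastI)
qed

lemma conjugate_le_above_c_last_drop:
  "conjugate m c (c last_drop + 1) \<le> conjugate m d (c last_drop + 1)"
proof -
  have "\<not> last_drop \<le> conjugate m c (c last_drop + 1)"
    using le_conjugate_iff[OF c_anti, of last_drop] last_drop by auto
  moreover have "last_drop - 1 \<le> conjugate m d (c last_drop + 1)"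
  proof (cases "last_drop = 1")
    case False
    then have "c last_drop < d (last_drop - 1)" using last_drop by (simp add: ext0_def)
    then show ?thesis
      using le_conjugate_iff[OF d_anti, of "last_drop - 1"] last_drop False last_diff by auto
  qed simp
  ultimately show ?thesis by simp
qed

lemma conjugate_less_upto_c_last_drop:
  assumes "first_conjugate_diff \<le> k" "k \<le> c last_drop"
  shows "conjugate m d k < conjugate m c k"
proof (cases "conjugate m d k < last_diff")
  case True
  let ?j = "conjugate m d k + 1"
  have j: "?j \<in> {1..last_diff}" using True by simp
  have "k \<le> c ?j"
  proof (rule le_c_upto_last_diff[OF j \<open>k \<le> c last_drop\<close>])
    assume "last_drop < ?j"
    then show "k \<le> d (?j - 1)" using le_conjugate_iff[OF d_anti, of "?j - 1" k] last_drop by auto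
  qed
  then have "?j \<le> conjugate m c k" using le_conjugate_iff[OF c_anti, of ?j k] j last_diff by auto
  then show ?thesis by simp
next
  case False
  have d_ge: "k \<le> d i" if "i \<in> {1..last_diff}" for i
    using le_conjugate_iff[OF d_anti, of i k] False that last_diff by auto
  have c_ge: "k \<le> c i" if i: "i \<in> {1..last_diff}" for i
  proof (rule le_c_upto_last_diff[OF i \<open>k \<le> c last_drop\<close>])
    assume "last_drop < i"
    with i last_drop show "k \<le> d (i - 1)" by (intro d_ge) auto
  qed
  have "first_conjugate_diff \<le> c i \<longleftrightarrow> first_conjugate_diff \<le> d i" if i: "i \<in> {1..m}" for i
  proof (cases "i \<le> last_diff")
    case True
    with c_ge[of i] d_ge[of i] i assms(1) show ?thesis by auto
  qed (use eq_beyond_last_diff[of i] i in auto)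
  then have "conjugate m c first_conjugate_diff = conjugate m d first_conjugate_diff"
    unfolding conjugate_def by metis
  with first_conjugate_diff(2) show ?thesis by simp
qed

lemma Least_conjugate_le_eq:
  "(LEAST i. first_conjugate_diff - 1 \<le> i \<and> conjugate m c (i + 1) \<le> conjugate m d (i + 1))
    = c last_drop"
proof (rule Least_equality)
  show "first_conjugate_diff - 1 \<le> c last_drop
      \<and> conjugate m c (c last_drop + 1) \<le> conjugate m d (c last_drop + 1)"
    using first_conjugate_diff(1) conjugate_le_above_c_last_drop by simp
next
  fix i assume i: "first_conjugate_diff - 1 \<le> i \<and> conjugate m c (i + 1) \<le> conjugate m d (i + 1)"
  show "c last_drop \<le> i"
  proof (rule ccontr)
    assume "\<not> c last_drop \<le> i"
    with i have "conjugate m d (i + 1) < conjugate m c (i + 1)"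
      by (intro conjugate_less_upto_c_last_drop) auto
    with i show False by simp
  qed
qed

end

theorem lemma4p6:
  fixes m :: nat and c d :: "nat \<Rightarrow> nat" and l f f' x e e' :: nat
  assumes c_mono: "\<And>i. 1 \<le> i \<Longrightarrow> i < m \<Longrightarrow> c (Suc i) \<le> c i"
    and d_mono: "\<And>i. 1 \<le> i \<Longrightarrow> i < m \<Longrightarrow> d (Suc i) \<le> d i"
    and neq: "\<exists>i \<in> {1..m}. c i \<noteq> d i"
    and l_def: "l = Max {i \<in> {1..m}. c i \<noteq> d i}"
    and f_def: "f = Max {i \<in> {1..l}. enat (c i) < ext0 d (i - 1)}"
    and f'_def: "f' = Max {i \<in> {1..l}. enat (d i) < ext0 c (i - 1)}"
    and x_def: "x = (LEAST i. conjugate m c i \<noteq> conjugate m d i)"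
    and e_def: "e = (LEAST i. x - 1 \<le> i \<and> conjugate m c (i + 1) \<le> conjugate m d (i + 1))"
    and e'_def: "e' = (LEAST i. x - 1 \<le> i \<and> conjugate m d (i + 1) \<le> conjugate m c (i + 1))"
  shows "e = c f \<and> e' = d f'"
proof -
  have c_anti: "antimono_on {1..m} c" and d_anti: "antimono_on {1..m} d"
    using c_mono d_mono by (auto intro: antimono_on_atLeastAtMost_SucI)
  interpret cd: partition_pair m c d
    using c_anti d_anti neq by unfold_locales
  have neq': "\<exists>i \<in> {1..m}. d i \<noteq> c i" using neq by metis
  interpret dc: partition_pair m d c
    using c_anti d_anti neq' by unfold_locales
  have "cd.last_diff = l" "dc.last_diff = l"
    unfolding cd.last_diff_def dc.last_diff_def l_def by (simp_all only: neq_commute)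
  moreover have "cd.first_conjugate_diff = x" "dc.first_conjugate_diff = x"
    unfolding cd.first_conjugate_diff_def dc.first_conjugate_diff_def x_def
    by (simp_all only: neq_commute)
  ultimately show ?thesis
    using cd.Least_conjugate_le_eq dc.Least_conjugate_le_eq
    unfolding e_def e'_def f_def f'_def cd.last_drop_def dc.last_drop_def by simp
qed

end
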